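(* Let $m,n\ge 3$ be integers. If $m$ and $n$ are both even, then $\chi_{ei}(C_m\square C_n)=2$. If $m\ge 4$, $m\notin\{5,7\}$, $n$ is odd and $n\ge 9$, then $\chi_{ei}(C_m\square C_n)=3$.
   Context: All graphs are finite and simple. $C_k$ denotes the cycle on $k$ vertices. A path $P_4$ in $G$ is a sequence $uxyv$ of four distinct vertices with $ux,xy,yv\in E(G)$; $u,v$ are its end vertices. An $e$-injective $k$-coloring of $G$ is a function $f:V(G)\to\{1,\dots,k\}$ with $f(u)\ne f(v)$ whenever $u,v$ are the end vertices of some path $P_4$ in $G$; $\chi_{ei}(G)$ is the least such $k$. In the Cartesian product $G\square H$ two vertices are adjacent if they are adjacent in one coordinate and equal in the other. *)

theory Defs
  imports Main
begin

text \<open>A graph is given by a vertex set V and a symmetric irreflexive adjacency relation E.\<close>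

definition p4_ends :: "'a set \<Rightarrow> ('a \<Rightarrow> 'a \<Rightarrow> bool) \<Rightarrow> 'a \<Rightarrow> 'a \<Rightarrow> bool" where
  "p4_ends V E u v \<longleftrightarrow> (\<exists>x y. distinct [u, x, y, v] \<and> {u, x, y, v} \<subseteq> V
      \<and> E u x \<and> E x y \<and> E y v)"

definition ei_coloring :: "'a set \<Rightarrow> ('a \<Rightarrow> 'a \<Rightarrow> bool) \<Rightarrow> nat \<Rightarrow> ('a \<Rightarrow> nat) \<Rightarrow> bool" where
  "ei_coloring V E k f \<longleftrightarrow> (\<forall>v\<in>V. f v \<in> {1..k})
      \<and> (\<forall>u v. p4_ends V E u v \<longrightarrow> f u \<noteq> f v)"

definition chi_ei :: "'a set \<Rightarrow> ('a \<Rightarrow> 'a \<Rightarrow> bool) \<Rightarrow> nat" where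
  "chi_ei V E = (LEAST k. \<exists>f. ei_coloring V E k f)"

definition cycle_verts :: "nat \<Rightarrow> nat set" where
  "cycle_verts k = {0..<k}"

definition cycle_adj :: "nat \<Rightarrow> nat \<Rightarrow> nat \<Rightarrow> bool" where
  "cycle_adj k i j \<longleftrightarrow> i < k \<and> j < k \<and> (j = (i + 1) mod k \<or> i = (j + 1) mod k)"

definition cart_verts :: "'a set \<Rightarrow> 'b set \<Rightarrow> ('a \<times> 'b) set" where
  "cart_verts V1 V2 = V1 \<times> V2"

definition cart_adj :: "('a \<Rightarrow> 'a \<Rightarrow> bool) \<Rightarrow> ('b \<Rightarrow> 'b \<Rightarrow> bool) \<Rightarrow> 'a \<times> 'b \<Rightarrow> 'a \<times> 'b \<Rightarrow> bool" where
  "cart_adj E1 E2 p q \<longleftrightarrow> (E1 (fst p) (fst q) \<and> snd p = snd q) \<or> (fst p = fst q \<and> E2 (snd p) (snd q))"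

end

theory Submission
  imports Defs
begin

(* For cycle homomorphisms p : C_m -> C_N and q : C_n -> C_N, the map (i, j) |-> (p i + q j) mod N
   is a homomorphism from C_m x C_n to C_N. It sends the ends of a P_4 to the ends of a walk of
   length 3 in C_N, which lie at cyclic distance 1 or 3, so every colouring of the circulant graph
   C_N(1,3) pulls back to an e-injective colouring. For even m, n take N = 2. For odd n >= 9 every
   admissible m maps into an odd cycle C_N with N >= 9 (by parity if m is even, by folding the
   longer of two odd cycles onto the shorter), and C_N(1,3) is 3-colourable for such N.
   Conversely, each 4-cycle (0,j) (1,j) (1,j+1) (0,j+1) is a P_4 whose ends are adjacent in
   column 0, so the colouring is proper on that column: at least 2 colours, and 3 when n is odd. *)

abbreviation torus_verts :: "nat \<Rightarrow> nat \<Rightarrow> (nat \<times> nat) set" where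
  "torus_verts m n \<equiv> cart_verts (cycle_verts m) (cycle_verts n)"

abbreviation torus_adj :: "nat \<Rightarrow> nat \<Rightarrow> nat \<times> nat \<Rightarrow> nat \<times> nat \<Rightarrow> bool" where
  "torus_adj m n \<equiv> cart_adj (cycle_adj m) (cycle_adj n)"

definition cycle_hom :: "nat \<Rightarrow> nat \<Rightarrow> (nat \<Rightarrow> nat) \<Rightarrow> bool" where
  "cycle_hom a b h \<longleftrightarrow> (\<forall>x y. cycle_adj a x y \<longrightarrow> cycle_adj b (h x) (h y))"

lemma cycle_homI:
  assumes "\<And>i. i < a \<Longrightarrow> cycle_adj b (h i) (h ((i + 1) mod a))"
  shows "cycle_hom a b h"
  unfolding cycle_hom_def
proof (intro allI impI)
  fix x y assume "cycle_adj a x y"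
  then have "x < a" "y < a" "y = (x + 1) mod a \<or> x = (y + 1) mod a"
    unfolding cycle_adj_def by auto
  then show "cycle_adj b (h x) (h y)"
    using assms[of x] assms[of y] by (auto simp: cycle_adj_def)
qed

lemma cycle_hom_id: "cycle_hom a a (\<lambda>x. x)"
  by (simp add: cycle_hom_def)

lemma cycle_hom_parity:
  assumes "even a" "2 \<le> b"
  shows "cycle_hom a b (\<lambda>x. x mod 2)"
proof (rule cycle_homI)
  fix i assume "i < a"
  have "(i + 1) mod a mod 2 = (i + 1) mod 2"
    using \<open>even a\<close> by (simp add: mod_mod_cancel)
  then show "cycle_adj b (i mod 2) ((i + 1) mod a mod 2)"
    using \<open>2 \<le> b\<close> unfolding cycle_adj_def by (auto simp: mod_Suc)
qed

definition fold_cycle :: "nat \<Rightarrow> nat \<Rightarrow> nat" where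
  "fold_cycle b i = (if i < b then i else if even (i - b) then b - 2 else b - 1)"

lemma cycle_hom_fold_cycle:
  assumes "odd a" "odd b" "3 \<le> b" "b \<le> a"
  shows "cycle_hom a b (fold_cycle b)"
proof (rule cycle_homI)
  fix i assume "i < a"
  show "cycle_adj b (fold_cycle b i) (fold_cycle b ((i + 1) mod a))"
  proof (cases "i + 1 = a")
    case True
    then have "fold_cycle b i = b - 1"
      using assms unfolding fold_cycle_def by (auto; presburger)
    then show ?thesis
      using True assms by (simp add: fold_cycle_def cycle_adj_def)
  next
    case False
    with \<open>i < a\<close> have "(i + 1) mod a = i + 1" by simp
    moreover consider "i + 1 < b" | "i + 1 = b" | "b \<le> i" by linarith
    then have "cycle_adj b (fold_cycle b i) (fold_cycle b (i + 1))"
      using assms by cases (auto simp: fold_cycle_def cycle_adj_def Suc_diff_le)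
    ultimately show ?thesis by simp
  qed
qed

lemma cycle_adj_add_mod:
  assumes "cycle_adj N a b"
  shows "cycle_adj N ((a + c) mod N) ((b + c) mod N)"
  using assms by (auto simp: cycle_adj_def mod_simps ac_simps)

lemma torus_adj_sum_hom:
  assumes "cycle_hom m N p" "cycle_hom n N q" "torus_adj m n u v"
  shows "cycle_adj N ((p (fst u) + q (snd u)) mod N) ((p (fst v) + q (snd v)) mod N)"
  using assms cycle_adj_add_mod[of N "p (fst u)" "p (fst v)" "q (snd u)"]
    cycle_adj_add_mod[of N "q (snd u)" "q (snd v)" "p (fst u)"]
  by (auto simp: cart_adj_def cycle_hom_def ac_simps)

lemma dvd_of_eq_succ_mod:
  fixes a b N :: nat
  assumes "b = (a + 1) mod N"
  shows "int N dvd int b - int a - 1"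
proof -
  have "int b mod int N = (int a + 1) mod int N"
    using assms by (simp add: of_nat_mod add.commute)
  then show ?thesis
    by (simp only: mod_eq_dvd_iff diff_diff_eq)
qed

lemma dvd_diff_neg_swap:
  fixes x a b c :: int
  shows "x dvd a - b - - c \<longleftrightarrow> x dvd b - a - c"
proof -
  have "a - b - - c = - (b - a - c)" by simp
  then show ?thesis by (simp only: dvd_minus_iff)
qed

lemma eq_mod_of_dvd:
  assumes "d < N" "int N dvd int d - int a - int s"
  shows "d = (a + s) mod N"
proof -
  have "int d mod int N = (int a + int s) mod int N"
    using assms(2) by (simp only: mod_eq_dvd_iff diff_diff_eq)
  then have "int d = int ((a + s) mod N)"
    using assms(1) by (simp add: of_nat_mod)
  then show ?thesis by simp
qed

lemma cycle_adj_imp_dvd: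
  assumes "cycle_adj N a b"
  shows "\<exists>e\<in>{1, -1}. int N dvd int b - int a - e"
proof -
  have "b = (a + 1) mod N \<or> a = (b + 1) mod N"
    using assms unfolding cycle_adj_def by auto
  then show ?thesis
    using dvd_of_eq_succ_mod dvd_diff_neg_swap[of "int N" "int b" "int a" 1] by blast
qed

lemma cycle_walk3_imp_dvd:
  assumes "cycle_adj N a b" "cycle_adj N b c" "cycle_adj N c d"
  shows "\<exists>s\<in>{1, -1, 3, -3}. int N dvd int d - int a - s"
proof -
  obtain e1 e2 e3 where e: "e1 \<in> {1, -1}" "e2 \<in> {1, -1}" "e3 \<in> {1, -1}"
    and "int N dvd int b - int a - e1" "int N dvd int c - int b - e2" "int N dvd int d - int c - e3"
    using assms by (meson cycle_adj_imp_dvd)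
  then have "int N dvd (int b - int a - e1) + (int c - int b - e2) + (int d - int c - e3)"
    by (intro dvd_add)
  then have "int N dvd int d - int a - (e1 + e2 + e3)"
    by (simp add: algebra_simps)
  moreover have "e1 + e2 + e3 \<in> {1, -1, 3, -3}"
    using e by auto
  ultimately show ?thesis by blast
qed

definition circulant13_coloring :: "nat \<Rightarrow> nat \<Rightarrow> (nat \<Rightarrow> nat) \<Rightarrow> bool" where
  "circulant13_coloring N k S \<longleftrightarrow>
     (\<forall>a<N. S a \<in> {1..k} \<and> S a \<noteq> S ((a + 1) mod N) \<and> S a \<noteq> S ((a + 3) mod N))"

lemma circulant13_coloring_walk3:
  assumes "circulant13_coloring N k S" "cycle_adj N a b" "cycle_adj N b c" "cycle_adj N c d"
  shows "S a \<noteq> S d"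
proof -
  have "a < N" "d < N" using assms(2,4) by (auto simp: cycle_adj_def)
  have separated: "S x \<noteq> S y"
    if "x < N" "y < N" "t \<in> {1, 3}" "int N dvd int y - int x - t" for x y and t :: int
  proof -
    have "y = (x + nat t) mod N"
      using eq_mod_of_dvd[of y N x "nat t"] that(2-4) by auto
    moreover have "nat t \<in> {1, 3}" using that(3) by auto
    ultimately show ?thesis using assms(1) that(1) unfolding circulant13_coloring_def by auto
  qed
  obtain s where s: "s \<in> {1, -1, 3, -3}" and dvd: "int N dvd int d - int a - s"
    using cycle_walk3_imp_dvd[OF assms(2-4)] by blast
  have "\<exists>t\<in>{1, 3}. int N dvd int d - int a - t \<or> int N dvd int a - int d - t"
  proof (cases "s \<in> {1, 3}")
    case True
    then show ?thesis using dvd by blast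
  next
    case False
    then have "- s \<in> {1, 3}" "s = - (- s)" using s by auto
    then show ?thesis using dvd dvd_diff_neg_swap[of "int N" "int d" "int a" "- s"] by metis
  qed
  then show ?thesis
    using separated[of a d] separated[of d a] \<open>a < N\<close> \<open>d < N\<close> by metis
qed

lemma circulant13_coloring_2: "circulant13_coloring 2 2 Suc"
  by (auto simp: circulant13_coloring_def less_2_cases_iff)

definition alt_pattern :: "nat \<Rightarrow> nat \<Rightarrow> nat" where
  "alt_pattern k x = (if x < 2 * k + 3 then x mod 2 + 1 else [2, 3, 2, 3, 1, 3] ! (x - (2 * k + 3)))"

lemma mod_eq_diff_if_less_double:
  fixes x N :: nat
  assumes "N \<le> x" "x < 2 * N"
  shows "x mod N = x - N"
  using assms by (simp add: mod_if)

lemma circulant13_coloring_alt_pattern: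
  "circulant13_coloring (2 * k + 9) 3 (alt_pattern k)"
  unfolding circulant13_coloring_def
proof (intro allI impI)
  fix a assume a: "a < 2 * k + 9"
  show "alt_pattern k a \<in> {1..3} \<and> alt_pattern k a \<noteq> alt_pattern k ((a + 1) mod (2 * k + 9))
          \<and> alt_pattern k a \<noteq> alt_pattern k ((a + 3) mod (2 * k + 9))"
  proof (cases "a < 2 * k")
    case True
    then show ?thesis by (simp add: alt_pattern_def) presburger
  next
    case False
    then obtain t where a_eq: "a = 2 * k + t" and "t < 9"
      using a by (metis add_less_cancel_left le_Suc_ex not_less)
    then have "t = 0 \<or> t = 1 \<or> t = 2 \<or> t = 3 \<or> t = 4 \<or> t = 5 \<or> t = 6 \<or> t = 7 \<or> t = 8"
      by linarith
    then show ?thesis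
      unfolding a_eq by (elim disjE) (simp_all add: mod_eq_diff_if_less_double alt_pattern_def)
  qed
qed

lemma circulant13_coloring_odd:
  assumes "odd N" "9 \<le> N"
  obtains S where "circulant13_coloring N 3 S"
proof -
  have "N = 2 * ((N - 9) div 2) + 9"
    using assms by presburger
  then show ?thesis
    using circulant13_coloring_alt_pattern that by metis
qed

lemma ei_coloring_comp_hom:
  assumes hom: "\<And>u v. u \<in> V \<Longrightarrow> v \<in> V \<Longrightarrow> E u v \<Longrightarrow> F (h u) (h v)"
    and range: "\<And>v. v \<in> V \<Longrightarrow> S (h v) \<in> {1..k}"
    and walk3: "\<And>a b c d. F a b \<Longrightarrow> F b c \<Longrightarrow> F c d \<Longrightarrow> S a \<noteq> S d"
  shows "ei_coloring V E k (\<lambda>v. S (h v))"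
  unfolding ei_coloring_def p4_ends_def
proof (intro conjI allI impI ballI)
  fix v assume "v \<in> V"
  then show "S (h v) \<in> {1..k}" by (rule range)
next
  fix u v assume "\<exists>x y. distinct [u, x, y, v] \<and> {u, x, y, v} \<subseteq> V \<and> E u x \<and> E x y \<and> E y v"
  then obtain x y where "{u, x, y, v} \<subseteq> V" "E u x" "E x y" "E y v" by blast
  then show "S (h u) \<noteq> S (h v)"
    using hom[of u x] hom[of x y] hom[of y v] walk3 by auto
qed

lemma ei_coloring_torus_of_cycle_homs:
  assumes "cycle_hom m N p" "cycle_hom n N q" "0 < N" "circulant13_coloring N k S"
  shows "ei_coloring (torus_verts m n) (torus_adj m n) k (\<lambda>u. S ((p (fst u) + q (snd u)) mod N))"
proof (rule ei_coloring_comp_hom[where F = "cycle_adj N" and S = S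
      and h = "\<lambda>u. (p (fst u) + q (snd u)) mod N"])
  fix u v assume "u \<in> torus_verts m n" "v \<in> torus_verts m n" "torus_adj m n u v"
  then show "cycle_adj N ((p (fst u) + q (snd u)) mod N) ((p (fst v) + q (snd v)) mod N)"
    using torus_adj_sum_hom assms(1,2) by blast
next
  fix u assume "u \<in> torus_verts m n"
  show "S ((p (fst u) + q (snd u)) mod N) \<in> {1..k}"
    using assms(3,4) by (simp add: circulant13_coloring_def)
next
  fix a b c d assume "cycle_adj N a b" "cycle_adj N b c" "cycle_adj N c d"
  then show "S a \<noteq> S d" using circulant13_coloring_walk3 assms(4) by blast
qed

lemma torus_p4_ends_column:
  assumes "2 \<le> m" "2 \<le> n" "j < n"
  shows "p4_ends (torus_verts m n) (torus_adj m n) (0, j) (0, (j + 1) mod n)"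
proof -
  let ?j' = "(j + 1) mod n"
  have "j \<noteq> ?j'" using assms by (cases "j + 1 = n") auto
  moreover have "{(0, j), (1, j), (1, ?j'), (0, ?j')} \<subseteq> torus_verts m n"
    using assms by (auto simp: cart_verts_def cycle_verts_def)
  moreover have "torus_adj m n (0, j) (1, j)" "torus_adj m n (1, j) (1, ?j')"
    "torus_adj m n (1, ?j') (0, ?j')"
    using assms by (auto simp: cart_adj_def cycle_adj_def)
  ultimately show ?thesis
    unfolding p4_ends_def by (intro exI[of _ "(1, j)"] exI[of _ "(1, ?j')"]) auto
qed

lemma path_2_coloring_parity:
  fixes g :: "nat \<Rightarrow> nat"
  assumes "\<And>i. i \<le> j \<Longrightarrow> g i \<in> {1, 2}" "\<And>i. i < j \<Longrightarrow> g i \<noteq> g (Suc i)"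
  shows "g j = g 0 \<longleftrightarrow> even j"
  using assms
proof (induction j)
  case (Suc j)
  have "g j = g 0 \<longleftrightarrow> even j"
    using Suc by simp
  moreover have "g j \<noteq> g (Suc j)" "g j \<in> {1, 2}" "g (Suc j) \<in> {1, 2}" "g 0 \<in> {1, 2}"
    using Suc.prems by auto
  ultimately show ?case by auto
qed simp

lemma odd_cycle_not_2_colorable:
  fixes g :: "nat \<Rightarrow> nat"
  assumes "odd n" "\<And>j. j < n \<Longrightarrow> g j \<in> {1, 2}"
    and proper: "\<And>j. j < n \<Longrightarrow> g j \<noteq> g ((j + 1) mod n)"
  shows False
proof -
  have "g (n - 1) = g 0 \<longleftrightarrow> even (n - 1)"
  proof (rule path_2_coloring_parity)
    fix i assume "i \<le> n - 1"
    with odd_pos[OF \<open>odd n\<close>] have "i < n" by linarith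
    then show "g i \<in> {1, 2}" by (rule assms(2))
  next
    fix i assume "i < n - 1"
    then show "g i \<noteq> g (Suc i)" using proper[of i] by simp
  qed
  then have "g (n - 1) = g 0" using \<open>odd n\<close> by (simp add: odd_pos)
  moreover have "g (n - 1) \<noteq> g 0"
    using proper[of "n - 1"] \<open>odd n\<close> by (simp add: odd_pos)
  ultimately show False by simp
qed

lemma ei_coloring_torus_column:
  assumes "ei_coloring (torus_verts m n) (torus_adj m n) k f" "2 \<le> m" "2 \<le> n" "j < n"
  shows "f (0, j) \<in> {1..k}" "f (0, j) \<noteq> f (0, (j + 1) mod n)"
  using assms torus_p4_ends_column[of m n j]
  by (auto simp: ei_coloring_def cart_verts_def cycle_verts_def)

lemma ei_coloring_torus_ge_2:
  assumes "ei_coloring (torus_verts m n) (torus_adj m n) k f" "2 \<le> m" "2 \<le> n"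
  shows "2 \<le> k"
  using ei_coloring_torus_column[OF assms, of 0] ei_coloring_torus_column(1)[OF assms, of 1]
    \<open>2 \<le> n\<close> by fastforce

lemma ei_coloring_torus_odd_ge_3:
  assumes "ei_coloring (torus_verts m n) (torus_adj m n) k f" "2 \<le> m" "3 \<le> n" "odd n"
  shows "3 \<le> k"
proof (rule ccontr)
  assume "\<not> 3 \<le> k"
  then have "f (0, j) \<in> {1, 2}" if "j < n" for j
    using ei_coloring_torus_column(1)[OF assms(1,2) _ that] \<open>3 \<le> n\<close> by auto
  then show False
    using odd_cycle_not_2_colorable[of n "\<lambda>j. f (0, j)"] ei_coloring_torus_column(2)[OF assms(1,2)]
      \<open>odd n\<close> \<open>3 \<le> n\<close> by auto
qed

lemma chi_ei_eqI:
  assumes "ei_coloring V E k f" "\<And>k' f'. ei_coloring V E k' f' \<Longrightarrow> k \<le> k'"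
  shows "chi_ei V E = k"
  unfolding chi_ei_def using assms by (blast intro: Least_equality)

lemma cycle_homs_to_odd_cycle:
  assumes "4 \<le> m" "m \<notin> {5, 7}" "odd n" "9 \<le> n"
  obtains N p q where "odd N" "9 \<le> N" "cycle_hom m N p" "cycle_hom n N q"
proof (cases "even m")
  case True
  then show ?thesis
    using that[OF assms(3,4) cycle_hom_parity cycle_hom_id] assms(4) by simp
next
  case False
  show ?thesis
  proof (cases "n \<le> m")
    case True
    then show ?thesis
      using that[OF assms(3,4) cycle_hom_fold_cycle cycle_hom_id] False assms(3,4) by simp
  next
    case n_gt_m: False
    have "9 \<le> m" using assms(1,2) False by simp presburger
    then show ?thesis
      using that[OF _ _ cycle_hom_id cycle_hom_fold_cycle] False n_gt_m assms(3) by simp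
  qed
qed

lemma chi_ei_torus_even:
  assumes "even m" "even n" "2 \<le> m" "2 \<le> n"
  shows "chi_ei (torus_verts m n) (torus_adj m n) = 2"
proof (rule chi_ei_eqI)
  show "ei_coloring (torus_verts m n) (torus_adj m n) 2
      (\<lambda>u. Suc ((fst u mod 2 + snd u mod 2) mod 2))"
    using assms by (intro ei_coloring_torus_of_cycle_homs cycle_hom_parity circulant13_coloring_2) auto
next
  fix k f assume "ei_coloring (torus_verts m n) (torus_adj m n) k f"
  then show "2 \<le> k" using assms(3,4) by (rule ei_coloring_torus_ge_2)
qed

lemma chi_ei_torus_odd:
  assumes "4 \<le> m" "m \<notin> {5, 7}" "odd n" "9 \<le> n"
  shows "chi_ei (torus_verts m n) (torus_adj m n) = 3"
proof -
  have "2 \<le> m" "3 \<le> n" using assms(1,4) by simp_all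
  obtain N p q where N: "odd N" "9 \<le> N" and hom: "cycle_hom m N p" "cycle_hom n N q"
    using cycle_homs_to_odd_cycle[OF assms] .
  obtain S where "circulant13_coloring N 3 S"
    using circulant13_coloring_odd[OF N] .
  then have "ei_coloring (torus_verts m n) (torus_adj m n) 3 (\<lambda>u. S ((p (fst u) + q (snd u)) mod N))"
    using hom N(2) by (intro ei_coloring_torus_of_cycle_homs) auto
  then show ?thesis
  proof (rule chi_ei_eqI)
    fix k f assume "ei_coloring (torus_verts m n) (torus_adj m n) k f"
    then show "3 \<le> k" using \<open>2 \<le> m\<close> \<open>3 \<le> n\<close> \<open>odd n\<close> by (rule ei_coloring_torus_odd_ge_3)
  qed
qed

theorem theorem4p10:
  fixes m n :: nat
  assumes "m \<ge> 3" and "n \<ge> 3"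
  shows "(even m \<and> even n \<longrightarrow>
           chi_ei (cart_verts (cycle_verts m) (cycle_verts n)) (cart_adj (cycle_adj m) (cycle_adj n)) = 2)
       \<and> (m \<ge> 4 \<and> m \<notin> {5, 7} \<and> odd n \<and> n \<ge> 9 \<longrightarrow>
           chi_ei (cart_verts (cycle_verts m) (cycle_verts n)) (cart_adj (cycle_adj m) (cycle_adj n)) = 3)"
  using assms chi_ei_torus_even chi_ei_torus_odd by simp

end
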